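(* Let $(X,d)$ be a separable geodesic Gromov-hyperbolic space with basepoint $o$, and $\mu$ a countably supported non-elementary probability measure on $\mathrm{Isom}(X)$ with finite exponential moment. Let $v(\mu)=\sup_{\xi\in\overline X^h}\mathbb E[(\sigma_0(X_1,\xi)-\ell_\mu)^2]$. Then there exists $C>0$ such that for every $\epsilon>0$ there exists $b>0$ such that for every $\lambda$ with $|\lambda|<v(\mu)/b$, every $n\in\mathbb N$ and every $x\in\overline X^h$, $$\mathbb E\big[e^{\lambda(\sigma(L_n,x)-n\ell_\mu)}\big]\le\exp\Big(\frac{\lambda^2(v(\mu)+\epsilon)n}{2}+C|\lambda|\Big).$$
   Context: Gromov-hyperbolic: $\exists\delta\ge0$, $(x|y)_o\ge\min\{(x|z)_o,(z|y)_o\}-\delta$ with $(x|y)_o=\frac12(d(x,o)+d(y,o)-d(x,y))$; non-elementary: the semigroup generated by $\mathrm{supp}\,\mu$ contains two loxodromic isometries with disjoint fixed point pairs on the Gromov boundary; $\kappa(g)=d(g\cdot o,o)$, finite exponential moment: $\int e^{\alpha\kappa}d\mu<\infty$ for some $\alpha>0$. $\overline X^h$ is the horofunction compactification (closure of $\{h_x:m\mapsto d(x,m)-d(x,o)\}$ among 1-Lipschitz functions vanishing at $o$, pointwise convergence), action $(g\cdot h)(m)=h(g^{-1}m)-h(g^{-1}o)$, Busemann cocycle $\sigma(g,h)=h(g^{-1}o)$. $X_i$ i.i.d. with law $\mu$, $L_n=X_n\cdots X_1$, $\ell_\mu=\lim\kappa(L_n)/n$ a.s. $\sigma_0(g,x):=\sigma(g,x)+\psi(g\cdot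 x)-\psi(x)$ where $\psi:\overline X^h\to\mathbb R$ is a fixed bounded measurable function (known to exist) such that $\int\sigma_0(g,x)d\mu(g)=\ell_\mu$ for all $x$. *)

theory Defs
  imports "HOL-Analysis.Analysis" "HOL-Probability.Probability"
begin

definition gromov_product :: "'a::metric_space \<Rightarrow> 'a \<Rightarrow> 'a \<Rightarrow> real" where
  "gromov_product o' x y = (dist x o' + dist y o' - dist x y) / 2"

definition gromov_hyperbolic :: "'a::metric_space \<Rightarrow> bool" where
  "gromov_hyperbolic o' \<longleftrightarrow> (\<exists>\<delta>\<ge>0. \<forall>x y z.
     gromov_product o' x y \<ge> min (gromov_product o' x z) (gromov_product o' z y) - \<delta>)"

definition geodesic_space :: "'a::metric_space itself \<Rightarrow> bool" where
  "geodesic_space _ \<longleftrightarrow> (\<forall>x y::'a. \<exists>\<gamma>::real \<Rightarrow> 'a. \<gamma> 0 = x \<and> \<gamma> (dist x y) = y \<and>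
     (\<forall>s\<in>{0..dist x y}. \<forall>t\<in>{0..dist x y}. dist (\<gamma> s) (\<gamma> t) = \<bar>s - t\<bar>))"

definition separable_space :: "'a::metric_space itself \<Rightarrow> bool" where
  "separable_space _ \<longleftrightarrow> (\<exists>D::'a set. countable D \<and> closure D = UNIV)"

definition isom :: "('a::metric_space \<Rightarrow> 'a) \<Rightarrow> bool" where
  "isom g \<longleftrightarrow> bij g \<and> (\<forall>x y. dist (g x) (g y) = dist x y)"

definition loxodromic :: "'a::metric_space \<Rightarrow> ('a \<Rightarrow> 'a) \<Rightarrow> bool" where
  "loxodromic o' g \<longleftrightarrow> isom g \<and>
     (\<exists>\<tau>>0. (\<lambda>n. dist ((g ^^ n) o') o' / real n) \<longlonglongrightarrow> \<tau>)"

definition same_boundary_point :: "'a::metric_space \<Rightarrow> (nat \<Rightarrow> 'a) \<Rightarrow> (nat \<Rightarrow> 'a) \<Rightarrow> bool" where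
  "same_boundary_point o' x y \<longleftrightarrow> filterlim (\<lambda>n. gromov_product o' (x n) (y n)) at_top sequentially"

inductive_set semigroup_gen :: "('a \<Rightarrow> 'a) set \<Rightarrow> ('a \<Rightarrow> 'a) set" for S where
  base: "g \<in> S \<Longrightarrow> g \<in> semigroup_gen S"
| comp: "g \<in> semigroup_gen S \<Longrightarrow> h \<in> semigroup_gen S \<Longrightarrow> g \<circ> h \<in> semigroup_gen S"

text \<open>Non-elementary: the semigroup generated by the support contains two loxodromic
  isometries whose fixed point pairs {g^{+},g^{-}}, {h^{+},h^{-}} on the Gromov boundary are
  disjoint; g^{\<pm>} is the boundary limit of g^{\<pm>n} o.\<close>
definition non_elementary :: "'a::metric_space \<Rightarrow> ('a \<Rightarrow> 'a) pmf \<Rightarrow> bool" where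
  "non_elementary o' \<mu> \<longleftrightarrow> (\<exists>g\<in>semigroup_gen (set_pmf \<mu>). \<exists>h\<in>semigroup_gen (set_pmf \<mu>).
     loxodromic o' g \<and> loxodromic o' h \<and>
     (\<forall>s\<in>{g, inv g}. \<forall>t\<in>{h, inv h}.
        \<not> same_boundary_point o' (\<lambda>n. (s ^^ n) o') (\<lambda>n. (t ^^ n) o')))"

definition kappa :: "'a::metric_space \<Rightarrow> ('a \<Rightarrow> 'a) \<Rightarrow> real" where
  "kappa o' g = dist (g o') o'"

definition finite_exp_moment :: "'a::metric_space \<Rightarrow> ('a \<Rightarrow> 'a) pmf \<Rightarrow> bool" where
  "finite_exp_moment o' \<mu> \<longleftrightarrow> (\<exists>\<alpha>>0. (\<integral>\<^sup>+ g. ennreal (exp (\<alpha> * kappa o' g)) \<partial>measure_pmf \<mu>) < \<infinity>)"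

definition horo_compactification :: "'a::metric_space \<Rightarrow> ('a \<Rightarrow> real) set" where
  "horo_compactification o' = closure (range (\<lambda>x m. dist x m - dist x o'))"

definition horo_action :: "'a::metric_space \<Rightarrow> ('a \<Rightarrow> 'a) \<Rightarrow> ('a \<Rightarrow> real) \<Rightarrow> ('a \<Rightarrow> real)" where
  "horo_action o' g h = (\<lambda>m. h (inv g m) - h (inv g o'))"

definition busemann :: "'a::metric_space \<Rightarrow> ('a \<Rightarrow> 'a) \<Rightarrow> ('a \<Rightarrow> real) \<Rightarrow> real" where
  "busemann o' g h = h (inv g o')"

definition busemann0 :: "'a::metric_space \<Rightarrow> (('a \<Rightarrow> real) \<Rightarrow> real) \<Rightarrow> ('a \<Rightarrow> 'a) \<Rightarrow> ('a \<Rightarrow> real) \<Rightarrow> real" where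
  "busemann0 o' \<psi> g h = busemann o' g h + \<psi> (horo_action o' g h) - \<psi> h"

text \<open>Random walk L_n = X_n \<circ> ... \<circ> X_1 on the path space of i.i.d. increments.\<close>
definition walk :: "nat \<Rightarrow> ('a \<Rightarrow> 'a) stream \<Rightarrow> ('a \<Rightarrow> 'a)" where
  "walk n \<omega> = fold (\<lambda>g acc. g \<circ> acc) (stake n \<omega>) id"

end

theory Submission
  imports Defs
begin

text \<open>By the centring of \<open>\<psi>\<close>, the increments \<open>\<sigma>\<^sub>0(g, \<xi>) - \<ell>\<^sub>\<mu>\<close> have mean zero and variance
  at most \<open>v(\<mu>)\<close> for every \<open>\<xi>\<close>, and they are dominated by \<open>\<kappa>(g)\<close> plus a constant, so they inherit
  the exponential moment of \<open>\<mu>\<close>. A third-order Taylor expansion of the exponential then bounds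
  their moment generating function by \<open>exp (\<lambda>\<^sup>2 (v + \<epsilon>) / 2)\<close>, uniformly in \<open>\<xi>\<close>, for \<open>|\<lambda>|\<close> small.
  Since \<open>\<sigma>\<^sub>0\<close> is a cocycle for the action on the horofunction compactification, conditioning on the
  first step of the walk and iterating multiplies these bounds, and passing from \<open>\<sigma>\<^sub>0\<close> back to
  \<open>\<sigma>\<close> costs the factor \<open>exp (2 sup |\<psi>| |\<lambda>|)\<close>. Separability, geodesicity, hyperbolicity,
  non-elementarity, the drift and the measurability of \<open>\<psi>\<close> only serve to construct \<open>\<psi>\<close>, whose
  existence is a hypothesis here.\<close>

section \<open>Moment generating functions of dominated increments\<close>

lemma power_le_fact_mult_exp:
  fixes w \<alpha> :: real
  assumes "0 \<le> w" "0 < \<alpha>"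
  shows "w ^ k \<le> fact k / \<alpha> ^ k * exp (\<alpha> * w)"
proof -
  have "(\<lambda>n. (\<alpha> * w) ^ n / fact n) sums exp (\<alpha> * w)"
    using exp_converges[of "\<alpha> * w"] by (simp add: divide_inverse_commute)
  then have "(\<Sum>n\<in>{k}. (\<alpha> * w) ^ n / fact n) \<le> exp (\<alpha> * w)"
    using assms sum_le_suminf[of "\<lambda>n. (\<alpha> * w) ^ n / fact n" "{k}"] by (simp add: sums_iff)
  then show ?thesis
    using assms by (simp add: field_simps power_mult_distrib)
qed

lemma exp_le_quadratic_plus_cubic:
  fixes y :: real
  shows "exp y \<le> 1 + y + y\<^sup>2 / 2 + \<bar>y\<bar> ^ 3 / 6 * exp \<bar>y\<bar>"
proof -
  obtain s where s: "\<bar>s\<bar> \<le> \<bar>y\<bar>"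
    and taylor: "exp y = (\<Sum>m<3. y ^ m / fact m) + exp s / fact 3 * y ^ 3"
    using Maclaurin_exp_le[of y 3] by blast
  have "exp s * y ^ 3 \<le> exp s * \<bar>y\<bar> ^ 3"
    by (intro mult_left_mono) (auto simp flip: power_abs)
  also have "\<dots> \<le> exp \<bar>y\<bar> * \<bar>y\<bar> ^ 3"
    using s by (intro mult_right_mono) auto
  finally have "exp s * y ^ 3 \<le> exp \<bar>y\<bar> * \<bar>y\<bar> ^ 3" .
  then show ?thesis
    using taylor by (simp add: eval_nat_numeral fact_numeral power2_eq_square mult.commute)
qed

lemma exp_dominated_power_moment:
  fixes \<mu> :: "'b pmf" and Y W :: "'b \<Rightarrow> real"
  assumes \<alpha>: "0 < \<alpha>"
    and dom: "AE g in \<mu>. \<bar>Y g\<bar> \<le> W g"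
    and int: "integrable \<mu> (\<lambda>g. exp (\<alpha> * W g))"
  shows "integrable \<mu> (\<lambda>g. Y g ^ k)"
    and "measure_pmf.expectation \<mu> (\<lambda>g. Y g ^ k)
           \<le> fact k / \<alpha> ^ k * measure_pmf.expectation \<mu> (\<lambda>g. exp (\<alpha> * W g))"
proof -
  have bound: "AE g in \<mu>. \<bar>Y g ^ k\<bar> \<le> fact k / \<alpha> ^ k * exp (\<alpha> * W g)"
    using dom
  proof (rule eventually_mono)
    fix g assume "\<bar>Y g\<bar> \<le> W g"
    then have "\<bar>Y g ^ k\<bar> \<le> W g ^ k"
      by (simp add: power_abs power_mono)
    also have "\<dots> \<le> fact k / \<alpha> ^ k * exp (\<alpha> * W g)"
      using \<open>\<bar>Y g\<bar> \<le> W g\<close> \<alpha> by (intro power_le_fact_mult_exp) auto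
    finally show "\<bar>Y g ^ k\<bar> \<le> fact k / \<alpha> ^ k * exp (\<alpha> * W g)" .
  qed
  have int': "integrable \<mu> (\<lambda>g. fact k / \<alpha> ^ k * exp (\<alpha> * W g))"
    using int by simp
  show int_Y: "integrable \<mu> (\<lambda>g. Y g ^ k)"
    using bound \<alpha> by (intro Bochner_Integration.integrable_bound[OF int']) (auto elim!: eventually_mono)
  have "measure_pmf.expectation \<mu> (\<lambda>g. Y g ^ k)
          \<le> measure_pmf.expectation \<mu> (\<lambda>g. fact k / \<alpha> ^ k * exp (\<alpha> * W g))"
    using bound by (intro integral_mono_AE[OF int_Y int']) (auto elim!: eventually_mono)
  then show "measure_pmf.expectation \<mu> (\<lambda>g. Y g ^ k)
               \<le> fact k / \<alpha> ^ k * measure_pmf.expectation \<mu> (\<lambda>g. exp (\<alpha> * W g))"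
    by simp
qed

lemma cube_mult_exp_le:
  fixes y w t \<alpha> :: real
  assumes y: "\<bar>y\<bar> \<le> w" and t: "\<bar>t\<bar> \<le> \<alpha> / 2" and \<alpha>: "0 < \<alpha>"
  shows "\<bar>y\<bar> ^ 3 * exp (\<bar>t\<bar> * \<bar>y\<bar>) \<le> 48 / \<alpha> ^ 3 * exp (\<alpha> * w)"
proof -
  have "\<bar>y\<bar> ^ 3 \<le> w ^ 3"
    using y by (intro power_mono) auto
  also have "\<dots> \<le> fact 3 / (\<alpha> / 2) ^ 3 * exp (\<alpha> / 2 * w)"
    using y \<alpha> by (intro power_le_fact_mult_exp) auto
  also have "\<dots> = 48 / \<alpha> ^ 3 * exp (\<alpha> * w / 2)"
    by (simp add: fact_numeral power_divide)
  finally have cube: "\<bar>y\<bar> ^ 3 \<le> 48 / \<alpha> ^ 3 * exp (\<alpha> * w / 2)" .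
  have "exp (\<bar>t\<bar> * \<bar>y\<bar>) \<le> exp (\<alpha> * w / 2)"
    using mult_mono[OF t y] \<alpha> by simp
  then have "\<bar>y\<bar> ^ 3 * exp (\<bar>t\<bar> * \<bar>y\<bar>) \<le> 48 / \<alpha> ^ 3 * exp (\<alpha> * w / 2) * exp (\<alpha> * w / 2)"
    using cube \<alpha> by (intro mult_mono) auto
  also have "\<dots> = 48 / \<alpha> ^ 3 * exp (\<alpha> * w)"
    by (simp flip: exp_add)
  finally show ?thesis .
qed

lemma mgf_le_taylor:
  fixes \<mu> :: "'b pmf" and Y :: "'b \<Rightarrow> real"
  assumes "integrable \<mu> Y" and "integrable \<mu> (\<lambda>g. (Y g)\<^sup>2)"
    and "integrable \<mu> (\<lambda>g. \<bar>Y g\<bar> ^ 3 * exp (\<bar>t\<bar> * \<bar>Y g\<bar>))"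
    and "measure_pmf.expectation \<mu> Y = 0"
  shows "(\<integral>\<^sup>+g. exp (t * Y g) \<partial>\<mu>)
           \<le> ennreal (1 + t\<^sup>2 / 2 * measure_pmf.expectation \<mu> (\<lambda>g. (Y g)\<^sup>2)
               + \<bar>t\<bar> ^ 3 / 6 * measure_pmf.expectation \<mu> (\<lambda>g. \<bar>Y g\<bar> ^ 3 * exp (\<bar>t\<bar> * \<bar>Y g\<bar>)))"
proof -
  define R where "R g = 1 + t * Y g + t\<^sup>2 / 2 * (Y g)\<^sup>2 + \<bar>t\<bar> ^ 3 / 6 * (\<bar>Y g\<bar> ^ 3 * exp (\<bar>t\<bar> * \<bar>Y g\<bar>))"
    for g
  have exp_le_R: "exp (t * Y g) \<le> R g" for g
    using exp_le_quadratic_plus_cubic[of "t * Y g"] by (simp add: R_def power_mult_distrib abs_mult)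
  have "(\<integral>\<^sup>+g. exp (t * Y g) \<partial>\<mu>) \<le> (\<integral>\<^sup>+g. R g \<partial>\<mu>)"
    by (intro nn_integral_mono ennreal_leI exp_le_R)
  also have "\<dots> = measure_pmf.expectation \<mu> R"
    using exp_le_R assms(1-3)
    by (intro nn_integral_eq_integral AE_I2) (auto simp: R_def intro: order_trans[OF exp_ge_zero])
  also have "measure_pmf.expectation \<mu> R
      = 1 + t\<^sup>2 / 2 * measure_pmf.expectation \<mu> (\<lambda>g. (Y g)\<^sup>2)
          + \<bar>t\<bar> ^ 3 / 6 * measure_pmf.expectation \<mu> (\<lambda>g. \<bar>Y g\<bar> ^ 3 * exp (\<bar>t\<bar> * \<bar>Y g\<bar>))"
    unfolding R_def using assms by simp
  finally show ?thesis .
qed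

lemma mgf_le_exp_variance:
  fixes \<mu> :: "'b pmf" and X W :: "'b \<Rightarrow> real"
  assumes \<alpha>: "0 < \<alpha>"
    and dom: "AE g in \<mu>. \<bar>X g - m\<bar> \<le> W g"
    and int: "integrable \<mu> (\<lambda>g. exp (\<alpha> * W g))"
    and mean: "measure_pmf.expectation \<mu> X = m"
    and var: "measure_pmf.expectation \<mu> (\<lambda>g. (X g - m)\<^sup>2) \<le> v"
    and t_le: "\<bar>t\<bar> \<le> \<alpha> / 2"
    and t_small: "\<bar>t\<bar> * (16 / \<alpha> ^ 3 * measure_pmf.expectation \<mu> (\<lambda>g. exp (\<alpha> * W g))) \<le> \<epsilon>"
  shows "(\<integral>\<^sup>+g. exp (t * (X g - m)) \<partial>\<mu>) \<le> exp (t\<^sup>2 * (v + \<epsilon>) / 2)"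
proof -
  define Y where "Y g = X g - m" for g
  define E where "E = measure_pmf.expectation \<mu> (\<lambda>g. exp (\<alpha> * W g))"
  define Q where "Q g = \<bar>Y g\<bar> ^ 3 * exp (\<bar>t\<bar> * \<bar>Y g\<bar>)" for g
  have dom_Y: "AE g in \<mu>. \<bar>Y g\<bar> \<le> W g"
    using dom by (simp add: Y_def)
  have int_Y: "integrable \<mu> Y" and int_Y2: "integrable \<mu> (\<lambda>g. (Y g)\<^sup>2)"
    using exp_dominated_power_moment(1)[OF \<alpha> dom_Y int, of 1]
      exp_dominated_power_moment(1)[OF \<alpha> dom_Y int, of 2] by simp_all
  have "integrable \<mu> (\<lambda>g. Y g + m)"
    using int_Y by simp
  then have "integrable \<mu> X"
    by (simp add: Y_def)
  then have mean_Y: "measure_pmf.expectation \<mu> Y = 0"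
    using mean by (simp add: Y_def[abs_def] Bochner_Integration.integral_diff)
  have Q_le: "AE g in \<mu>. Q g \<le> 48 / \<alpha> ^ 3 * exp (\<alpha> * W g)"
    using dom_Y by (rule eventually_mono) (unfold Q_def, rule cube_mult_exp_le[OF _ t_le \<alpha>])
  have int_bound: "integrable \<mu> (\<lambda>g. 48 / \<alpha> ^ 3 * exp (\<alpha> * W g))"
    using int by simp
  have int_Q: "integrable \<mu> Q"
    using Q_le \<alpha> by (intro Bochner_Integration.integrable_bound[OF int_bound])
      (auto simp: Q_def elim!: eventually_mono)
  have "\<bar>t\<bar> ^ 3 / 6 * measure_pmf.expectation \<mu> Q \<le> \<bar>t\<bar> ^ 3 / 6 * (48 / \<alpha> ^ 3 * E)"
    using integral_mono_AE[OF int_Q int_bound Q_le] by (intro mult_left_mono) (auto simp: E_def)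
  also have "\<dots> = t\<^sup>2 / 2 * (\<bar>t\<bar> * (16 / \<alpha> ^ 3 * E))"
    using \<alpha> by (simp add: power2_eq_square power3_eq_cube field_simps)
  also have "\<dots> \<le> t\<^sup>2 / 2 * \<epsilon>"
    using t_small by (intro mult_left_mono) (auto simp: E_def)
  finally have remainder: "\<bar>t\<bar> ^ 3 / 6 * measure_pmf.expectation \<mu> Q \<le> t\<^sup>2 / 2 * \<epsilon>" .
  have "t\<^sup>2 / 2 * measure_pmf.expectation \<mu> (\<lambda>g. (Y g)\<^sup>2) \<le> t\<^sup>2 / 2 * v"
    using var by (intro mult_left_mono) (auto simp: Y_def)
  with remainder have "1 + t\<^sup>2 / 2 * measure_pmf.expectation \<mu> (\<lambda>g. (Y g)\<^sup>2)
      + \<bar>t\<bar> ^ 3 / 6 * measure_pmf.expectation \<mu> Q \<le> 1 + t\<^sup>2 * (v + \<epsilon>) / 2"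
    by (simp add: algebra_simps)
  also have "\<dots> \<le> exp (t\<^sup>2 * (v + \<epsilon>) / 2)"
    by (metis exp_ge_add_one_self)
  finally have "1 + t\<^sup>2 / 2 * measure_pmf.expectation \<mu> (\<lambda>g. (Y g)\<^sup>2)
      + \<bar>t\<bar> ^ 3 / 6 * measure_pmf.expectation \<mu> Q \<le> exp (t\<^sup>2 * (v + \<epsilon>) / 2)" .
  from order_trans[OF mgf_le_taylor[OF int_Y int_Y2 int_Q[unfolded Q_def] mean_Y] ennreal_leI[OF this[unfolded Q_def]]]
  show ?thesis
    by (simp add: Y_def)
qed

lemma uniform_mgf_le_exp_variance:
  fixes \<mu> :: "'b pmf" and X :: "'i \<Rightarrow> 'b \<Rightarrow> real" and W :: "'b \<Rightarrow> real"
  assumes \<alpha>: "0 < \<alpha>"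
    and int: "integrable \<mu> (\<lambda>g. exp (\<alpha> * W g))"
    and dom: "\<And>i. i \<in> I \<Longrightarrow> AE g in \<mu>. \<bar>X i g - m\<bar> \<le> W g"
    and mean: "\<And>i. i \<in> I \<Longrightarrow> measure_pmf.expectation \<mu> (X i) = m"
    and var: "\<And>i. i \<in> I \<Longrightarrow> measure_pmf.expectation \<mu> (\<lambda>g. (X i g - m)\<^sup>2) \<le> v"
    and \<epsilon>: "0 < \<epsilon>"
  obtains t\<^sub>0 where "0 < t\<^sub>0"
    and "\<And>i t. i \<in> I \<Longrightarrow> \<bar>t\<bar> < t\<^sub>0 \<Longrightarrow>
           (\<integral>\<^sup>+g. exp (t * (X i g - m)) \<partial>\<mu>) \<le> exp (t\<^sup>2 * (v + \<epsilon>) / 2)"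
proof
  define K where "K = 16 / \<alpha> ^ 3 * measure_pmf.expectation \<mu> (\<lambda>g. exp (\<alpha> * W g))"
  have "0 \<le> K"
    unfolding K_def using \<alpha> by (intro mult_nonneg_nonneg integral_nonneg_AE) auto
  then show "0 < min (\<alpha> / 2) (\<epsilon> / (K + 1))"
    using \<alpha> \<epsilon> by simp
  fix i t assume i: "i \<in> I" and t: "\<bar>t\<bar> < min (\<alpha> / 2) (\<epsilon> / (K + 1))"
  have "\<bar>t\<bar> * K \<le> \<bar>t\<bar> * (K + 1)"
    by (intro mult_left_mono) auto
  also have "\<dots> \<le> \<epsilon>"
    using t \<open>0 \<le> K\<close> by (simp add: less_divide_eq less_imp_le)
  finally have "\<bar>t\<bar> * K \<le> \<epsilon>" .
  then show "(\<integral>\<^sup>+g. exp (t * (X i g - m)) \<partial>\<mu>) \<le> exp (t\<^sup>2 * (v + \<epsilon>) / 2)"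
    using t by (intro mgf_le_exp_variance[OF \<alpha> dom[OF i] int mean[OF i] var[OF i]])
      (auto simp: K_def)
qed

section \<open>Path space of a discrete measure\<close>

lemma AE_stake_in_set_pmf:
  fixes \<mu> :: "'b pmf"
  shows "AE \<omega> in stream_space \<mu>. set (stake n \<omega>) \<subseteq> set_pmf \<mu>"
proof -
  have "AE \<omega> in stream_space \<mu>. stream_all (\<lambda>g. g \<in> set_pmf \<mu>) \<omega>"
    by (rule prob_space.AE_stream_all[OF prob_space_measure_pmf]) (auto simp: AE_measure_pmf)
  then show ?thesis
    by (rule eventually_mono) (auto simp: stream_all_iff in_set_conv_nth)
qed

text \<open>Mapping every point into the countable support makes functions of finitely many coordinates
  measurable on the path space, while changing nothing almost surely.\<close>
definition retract_to_support :: "'b pmf \<Rightarrow> 'b \<Rightarrow> 'b" where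
  "retract_to_support \<mu> g = (if g \<in> set_pmf \<mu> then g else (SOME h. h \<in> set_pmf \<mu>))"

lemma retract_to_support_in_set_pmf: "retract_to_support \<mu> g \<in> set_pmf \<mu>"
  using set_pmf_not_empty[of \<mu>] by (auto simp: retract_to_support_def intro: someI_ex)

lemma measurable_stake_retract_to_support:
  fixes \<mu> :: "'b pmf" and G :: "'b list \<Rightarrow> ennreal"
  shows "(\<lambda>\<omega>. G (stake n (smap (retract_to_support \<mu>) \<omega>))) \<in> borel_measurable (stream_space \<mu>)"
proof -
  let ?S = "stream_space (measure_pmf \<mu>)" and ?A = "{xs. set xs \<subseteq> set_pmf \<mu> \<and> length xs = n}"
  have "countable ?A"
    by (rule countable_subset[of _ "lists (set_pmf \<mu>)"]) auto
  moreover have "(\<lambda>\<omega>. stake n (smap (retract_to_support \<mu>) \<omega>)) -` {xs} \<inter> space ?S \<in> sets ?S"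
    if "xs \<in> ?A" for xs
  proof -
    have "(\<lambda>\<omega>. stake n (smap (retract_to_support \<mu>) \<omega>)) -` {xs} \<inter> space ?S
        = {\<omega>\<in>space ?S. \<forall>i\<in>{..<n}. retract_to_support \<mu> (\<omega> !! i) = xs ! i}"
      using that by (auto simp: list_eq_iff_nth_eq)
    also have "\<dots> \<in> sets ?S"
      by measurable (auto intro: measurable_compose[OF measurable_snth])
    finally show ?thesis .
  qed
  ultimately have "(\<lambda>\<omega>. stake n (smap (retract_to_support \<mu>) \<omega>)) \<in> measurable ?S (count_space ?A)"
    using retract_to_support_in_set_pmf by (subst measurable_count_space_eq_countable) auto
  then show ?thesis
    by (rule measurable_compose) simp
qed

lemma nn_integral_stake_retract_to_support:
  fixes \<mu> :: "'b pmf"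
  shows "(\<integral>\<^sup>+\<omega>. G (stake n \<omega>) \<partial>stream_space \<mu>)
     = (\<integral>\<^sup>+\<omega>. G (stake n (smap (retract_to_support \<mu>) \<omega>)) \<partial>stream_space \<mu>)"
  using AE_stake_in_set_pmf[where \<mu>=\<mu> and n=n]
proof (intro nn_integral_cong_AE, elim eventually_mono)
  fix \<omega> assume "set (stake n \<omega>) \<subseteq> set_pmf \<mu>"
  then have "map (retract_to_support \<mu>) (stake n \<omega>) = stake n \<omega>"
    by (auto simp: retract_to_support_def intro!: map_idI)
  then show "G (stake n \<omega>) = G (stake n (smap (retract_to_support \<mu>) \<omega>))"
    by simp
qed

lemma nn_integral_stake_cmult:
  fixes \<mu> :: "'b pmf"
  shows "(\<integral>\<^sup>+\<omega>. c * G (stake n \<omega>) \<partial>stream_space \<mu>) = c * (\<integral>\<^sup>+\<omega>. G (stake n \<omega>) \<partial>stream_space \<mu>)"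
  using nn_integral_stake_retract_to_support[where G="\<lambda>xs. c * G xs"]
    nn_integral_stake_retract_to_support[where G=G]
    nn_integral_cmult[OF measurable_stake_retract_to_support[where G=G]]
  by simp

lemma nn_integral_stake_Suc:
  fixes \<mu> :: "'b pmf"
  shows "(\<integral>\<^sup>+\<omega>. G (stake (Suc n) \<omega>) \<partial>stream_space \<mu>)
     = (\<integral>\<^sup>+g. (\<integral>\<^sup>+\<omega>. G (g # stake n \<omega>) \<partial>stream_space \<mu>) \<partial>\<mu>)"
proof -
  let ?r = "retract_to_support \<mu>"
  have "(\<integral>\<^sup>+\<omega>. G (stake (Suc n) \<omega>) \<partial>stream_space \<mu>)
      = (\<integral>\<^sup>+g. (\<integral>\<^sup>+\<omega>. G (stake (Suc n) (smap ?r (g ## \<omega>))) \<partial>stream_space \<mu>) \<partial>\<mu>)"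
    unfolding nn_integral_stake_retract_to_support[where G=G]
    by (rule prob_space.nn_integral_stream_space[OF prob_space_measure_pmf measurable_stake_retract_to_support])
  also have "\<dots> = (\<integral>\<^sup>+g. (\<integral>\<^sup>+\<omega>. G (?r g # stake n \<omega>) \<partial>stream_space \<mu>) \<partial>\<mu>)"
    using nn_integral_stake_retract_to_support[where G="\<lambda>xs. G (?r _ # xs)"] by simp
  also have "\<dots> = (\<integral>\<^sup>+g. (\<integral>\<^sup>+\<omega>. G (g # stake n \<omega>) \<partial>stream_space \<mu>) \<partial>\<mu>)"
    by (intro nn_integral_cong_AE) (auto simp: AE_measure_pmf_iff retract_to_support_def)
  finally show ?thesis .
qed

section \<open>Horofunctions and the Busemann cocycle\<close>

lemma horo_compactification_induct [consumes 1, case_names closed horofunction]: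
  assumes "h \<in> horo_compactification o'"
    and "closed {h. P h}"
    and "\<And>x. P (\<lambda>m. dist x m - dist x o')"
  shows "P h"
proof -
  have "closure (range (\<lambda>x m. dist x m - dist x o')) \<subseteq> {h. P h}"
    using assms(2,3) by (intro closure_minimal) auto
  then show ?thesis
    using assms(1) unfolding horo_compactification_def by auto
qed

lemma horofunction_base_eq_0: "h \<in> horo_compactification o' \<Longrightarrow> h o' = 0"
proof (induction h rule: horo_compactification_induct)
  case closed
  show ?case
    by (intro closed_Collect_eq continuous_on_product_coordinates continuous_on_const)
qed simp

lemma horofunction_lipschitz:
  assumes "h \<in> horo_compactification o'"
  shows "\<bar>h a - h b\<bar> \<le> dist a b"
  using assms
proof (induction h rule: horo_compactification_induct)
  case closed
  show ?case
    by (intro closed_Collect_le continuous_on_const continuous_intros continuous_on_product_coordinates)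
next
  case (horofunction x)
  show ?case
    using abs_dist_diff_le[of a x b] by (simp add: dist_commute)
qed

lemma isom_id: "isom id"
  by (simp add: isom_def)

lemma isom_comp: "isom a \<Longrightarrow> isom b \<Longrightarrow> isom (a \<circ> b)"
  by (simp add: isom_def bij_comp)

lemma isom_apply_inv: "isom g \<Longrightarrow> g (inv g m) = m"
  unfolding isom_def by (meson bij_inv_eq_iff)

lemma horo_action_horofunction:
  assumes "isom g"
  shows "horo_action o' g (\<lambda>m. dist x m - dist x o') = (\<lambda>m. dist (g x) m - dist (g x) o')"
proof -
  have "dist x (inv g m) = dist (g x) m" for m
    using assms isom_apply_inv[OF assms, of m] unfolding isom_def by metis
  then show ?thesis
    by (simp add: horo_action_def)
qed

lemma horo_action_in_horo_compactification:
  assumes "isom g" and "h \<in> horo_compactification o'"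
  shows "horo_action o' g h \<in> horo_compactification o'"
  using assms(2)
proof (induction h rule: horo_compactification_induct)
  case closed
  have "continuous_on UNIV (horo_action o' g)"
    unfolding horo_action_def by (intro continuous_intros continuous_on_product_coordinates)
  then show ?case
    using closed_vimage[of "horo_compactification o'" "horo_action o' g"]
    by (simp add: horo_compactification_def vimage_def)
next
  case (horofunction x)
  show ?case
    by (simp add: horo_action_horofunction[OF assms(1)] horo_compactification_def closure_subset[THEN subsetD])
qed

lemma horo_action_id: "h \<in> horo_compactification o' \<Longrightarrow> horo_action o' id h = h"
  by (simp add: horo_action_def horofunction_base_eq_0)

lemma horo_action_comp:
  "bij a \<Longrightarrow> bij b \<Longrightarrow> horo_action o' (a \<circ> b) h = horo_action o' a (horo_action o' b h)"
  by (simp add: horo_action_def o_inv_distrib)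

lemma busemann_comp:
  "bij a \<Longrightarrow> bij b \<Longrightarrow> busemann o' (a \<circ> b) h = busemann o' b h + busemann o' a (horo_action o' b h)"
  by (simp add: busemann_def horo_action_def o_inv_distrib)

lemma busemann0_comp:
  "bij a \<Longrightarrow> bij b \<Longrightarrow>
     busemann0 o' \<psi> (a \<circ> b) h = busemann0 o' \<psi> b h + busemann0 o' \<psi> a (horo_action o' b h)"
  by (simp add: busemann0_def busemann_comp horo_action_comp)

lemma busemann0_id: "h \<in> horo_compactification o' \<Longrightarrow> busemann0 o' \<psi> id h = 0"
  by (simp add: busemann0_def busemann_def horo_action_id horofunction_base_eq_0)

lemma abs_busemann_le_kappa:
  assumes g: "isom g" and h: "h \<in> horo_compactification o'"
  shows "\<bar>busemann o' g h\<bar> \<le> kappa o' g"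
proof -
  have "\<bar>busemann o' g h\<bar> = \<bar>h (inv g o') - h o'\<bar>"
    using horofunction_base_eq_0[OF h] by (simp add: busemann_def)
  also have "\<dots> \<le> dist (inv g o') o'"
    by (rule horofunction_lipschitz[OF h])
  also have "\<dots> = dist (g (inv g o')) (g o')"
    using g unfolding isom_def by simp
  also have "\<dots> = kappa o' g"
    by (simp add: isom_apply_inv[OF g] kappa_def dist_commute)
  finally show ?thesis .
qed

lemma abs_busemann0_le:
  assumes "isom g" and "h \<in> horo_compactification o'"
    and "\<And>x. x \<in> horo_compactification o' \<Longrightarrow> \<bar>\<psi> x\<bar> \<le> B"
  shows "\<bar>busemann0 o' \<psi> g h\<bar> \<le> kappa o' g + 2 * B"
  using abs_busemann_le_kappa[OF assms(1,2)] assms(3)[OF assms(2)]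
    assms(3)[OF horo_action_in_horo_compactification[OF assms(1,2)]]
  unfolding busemann0_def by linarith

lemma busemann_le_busemann0:
  assumes "isom g" and "h \<in> horo_compactification o'"
    and "\<And>x. x \<in> horo_compactification o' \<Longrightarrow> \<bar>\<psi> x\<bar> \<le> B"
  shows "t * busemann o' g h \<le> 2 * B * \<bar>t\<bar> + t * busemann0 o' \<psi> g h"
proof -
  have "\<bar>\<psi> (horo_action o' g h) - \<psi> h\<bar> \<le> 2 * B"
    using assms(3)[OF assms(2)] assms(3)[OF horo_action_in_horo_compactification[OF assms(1,2)]]
      abs_triangle_ineq4[of "\<psi> (horo_action o' g h)" "\<psi> h"] by linarith
  then have "\<bar>t * (\<psi> (horo_action o' g h) - \<psi> h)\<bar> \<le> 2 * B * \<bar>t\<bar>"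
    by (simp add: abs_mult mult_left_mono mult.commute)
  then show ?thesis
    unfolding busemann0_def by (simp add: algebra_simps abs_le_iff)
qed

section \<open>Cocycles along the random walk\<close>

definition left_prod :: "('a \<Rightarrow> 'a) list \<Rightarrow> 'a \<Rightarrow> 'a" where
  "left_prod xs = fold (\<lambda>g acc. g \<circ> acc) xs id"

lemma walk_eq_left_prod: "walk n \<omega> = left_prod (stake n \<omega>)"
  by (simp add: walk_def left_prod_def)

lemma left_prod_Nil [simp]: "left_prod [] = id"
  by (simp add: left_prod_def)

lemma left_prod_Cons [simp]: "left_prod (g # xs) = left_prod xs \<circ> g"
proof -
  have "fold (\<lambda>g acc. g \<circ> acc) xs (a \<circ> g) = fold (\<lambda>g acc. g \<circ> acc) xs a \<circ> g" for a
    by (induction xs arbitrary: a) (simp_all add: o_assoc)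
  from this[of id] show ?thesis
    by (simp add: left_prod_def)
qed

lemma left_prod_closed:
  assumes "id \<in> G" and "\<And>a b. a \<in> G \<Longrightarrow> b \<in> G \<Longrightarrow> a \<circ> b \<in> G" and "set xs \<subseteq> G"
  shows "left_prod xs \<in> G"
  using assms(3) by (induction xs) (simp_all add: assms(1,2))

lemma nn_integral_exp_cocycle_walk_le:
  fixes \<mu> :: "('a \<Rightarrow> 'a) pmf" and act :: "('a \<Rightarrow> 'a) \<Rightarrow> 'x \<Rightarrow> 'x" and c :: "('a \<Rightarrow> 'a) \<Rightarrow> 'x \<Rightarrow> real"
    and s :: real
  assumes supp: "set_pmf \<mu> \<subseteq> G" and id: "id \<in> G" and comp: "\<And>a b. a \<in> G \<Longrightarrow> b \<in> G \<Longrightarrow> a \<circ> b \<in> G"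
    and act: "\<And>g x. g \<in> G \<Longrightarrow> x \<in> K \<Longrightarrow> act g x \<in> K"
    and c_id: "\<And>x. x \<in> K \<Longrightarrow> c id x = 0"
    and cocycle: "\<And>a b x. a \<in> G \<Longrightarrow> b \<in> G \<Longrightarrow> x \<in> K \<Longrightarrow> c (a \<circ> b) x = c b x + c a (act b x)"
    and mgf: "\<And>\<xi>. \<xi> \<in> K \<Longrightarrow> (\<integral>\<^sup>+g. exp (c g \<xi>) \<partial>\<mu>) \<le> ennreal (exp s)"
    and "x \<in> K"
  shows "(\<integral>\<^sup>+\<omega>. exp (c (walk n \<omega>) x) \<partial>stream_space \<mu>) \<le> ennreal (exp (real n * s))"
  using \<open>x \<in> K\<close>
proof (induction n arbitrary: x)
  case 0
  interpret prob_space "stream_space \<mu>"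
    by (rule prob_space.prob_space_stream_space[OF prob_space_measure_pmf])
  show ?case
    by (simp add: walk_eq_left_prod c_id[OF 0, unfolded id_def] emeasure_space_1)
next
  case (Suc n x)
  let ?S = "stream_space (measure_pmf \<mu>)"
  have walk_in_G: "AE \<omega> in ?S. walk n \<omega> \<in> G"
    using AE_stake_in_set_pmf[where \<mu>=\<mu> and n=n] supp
    by (elim eventually_mono) (auto simp: walk_eq_left_prod intro!: left_prod_closed[OF id comp])
  have step: "(\<integral>\<^sup>+\<omega>. exp (c (walk n \<omega> \<circ> g) x) \<partial>?S) \<le> ennreal (exp (c g x)) * ennreal (exp (real n * s))"
    if "g \<in> set_pmf \<mu>" for g
  proof -
    have g: "g \<in> G"
      using that supp by auto
    have "(\<integral>\<^sup>+\<omega>. exp (c (walk n \<omega> \<circ> g) x) \<partial>?S)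
        = (\<integral>\<^sup>+\<omega>. ennreal (exp (c g x)) * exp (c (walk n \<omega>) (act g x)) \<partial>?S)"
      using walk_in_G by (intro nn_integral_cong_AE)
        (auto elim!: eventually_mono simp: cocycle[OF _ g Suc.prems] exp_add ennreal_mult)
    also have "\<dots> = ennreal (exp (c g x)) * (\<integral>\<^sup>+\<omega>. exp (c (walk n \<omega>) (act g x)) \<partial>?S)"
      unfolding walk_eq_left_prod by (rule nn_integral_stake_cmult)
    also have "\<dots> \<le> ennreal (exp (c g x)) * ennreal (exp (real n * s))"
      using Suc.IH[OF act[OF g Suc.prems]] by (rule mult_left_mono) simp
    finally show ?thesis .
  qed
  have "(\<integral>\<^sup>+\<omega>. exp (c (walk (Suc n) \<omega>) x) \<partial>?S)
      = (\<integral>\<^sup>+g. (\<integral>\<^sup>+\<omega>. exp (c (walk n \<omega> \<circ> g) x) \<partial>?S) \<partial>\<mu>)"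
    using nn_integral_stake_Suc[where G="\<lambda>xs. ennreal (exp (c (left_prod xs) x))"]
    by (simp add: walk_eq_left_prod)
  also have "\<dots> \<le> (\<integral>\<^sup>+g. ennreal (exp (c g x)) * ennreal (exp (real n * s)) \<partial>\<mu>)"
    using step by (intro nn_integral_mono_AE) (simp add: AE_measure_pmf_iff)
  also have "\<dots> = (\<integral>\<^sup>+g. exp (c g x) \<partial>\<mu>) * ennreal (exp (real n * s))"
    by (rule nn_integral_multc) simp
  also have "\<dots> \<le> ennreal (exp s) * ennreal (exp (real n * s))"
    using mgf[OF Suc.prems] by (rule mult_right_mono) simp
  also have "\<dots> = ennreal (exp (real (Suc n) * s))"
    by (simp add: exp_add distrib_right flip: ennreal_mult)
  finally show ?case .
qed

lemma AE_isom_walk: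
  fixes \<mu> :: "('a::metric_space \<Rightarrow> 'a) pmf"
  assumes "\<forall>g\<in>set_pmf \<mu>. isom g"
  shows "AE \<omega> in stream_space \<mu>. isom (walk n \<omega>)"
  using AE_stake_in_set_pmf[where \<mu>=\<mu> and n=n]
proof (elim eventually_mono)
  fix \<omega> assume "set (stake n \<omega>) \<subseteq> set_pmf \<mu>"
  then have "left_prod (stake n \<omega>) \<in> Collect isom"
    using assms by (intro left_prod_closed) (auto simp: isom_id isom_comp)
  then show "isom (walk n \<omega>)"
    by (simp add: walk_eq_left_prod)
qed

lemma busemann0_walk_mgf_le:
  fixes \<mu> :: "('a::metric_space \<Rightarrow> 'a) pmf" and t s :: real
  assumes isoms: "\<forall>g\<in>set_pmf \<mu>. isom g"
    and mgf: "\<And>\<xi>. \<xi> \<in> horo_compactification o' \<Longrightarrow>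
               (\<integral>\<^sup>+g. exp (t * (busemann0 o' \<psi> g \<xi> - ell)) \<partial>\<mu>) \<le> ennreal (exp s)"
    and x: "x \<in> horo_compactification o'"
  shows "(\<integral>\<^sup>+\<omega>. exp (t * busemann0 o' \<psi> (walk n \<omega>) x) \<partial>stream_space \<mu>)
           \<le> ennreal (exp (real n * (s + t * ell)))"
proof (rule nn_integral_exp_cocycle_walk_le[where G="Collect isom" and act="horo_action o'" and K="horo_compactification o'"])
  show "set_pmf \<mu> \<subseteq> Collect isom"
    using isoms by auto
  show "id \<in> Collect isom"
    by (simp add: isom_id)
  show "a \<circ> b \<in> Collect isom" if "a \<in> Collect isom" "b \<in> Collect isom" for a b
    using that by (simp add: isom_comp)
  show "horo_action o' g h \<in> horo_compactification o'"
    if "g \<in> Collect isom" "h \<in> horo_compactification o'" for g h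
    using that by (simp add: horo_action_in_horo_compactification)
  show "t * busemann0 o' \<psi> id h = 0" if "h \<in> horo_compactification o'" for h
    using that by (simp add: busemann0_id)
  show "t * busemann0 o' \<psi> (a \<circ> b) h = t * busemann0 o' \<psi> b h + t * busemann0 o' \<psi> a (horo_action o' b h)"
    if "a \<in> Collect isom" "b \<in> Collect isom" for a b h
    using that by (simp add: busemann0_comp isom_def distrib_left)
  show "(\<integral>\<^sup>+g. exp (t * busemann0 o' \<psi> g \<xi>) \<partial>\<mu>) \<le> ennreal (exp (s + t * ell))"
    if "\<xi> \<in> horo_compactification o'" for \<xi>
  proof -
    have "(\<integral>\<^sup>+g. exp (t * busemann0 o' \<psi> g \<xi>) \<partial>\<mu>)
        = (\<integral>\<^sup>+g. ennreal (exp (t * ell)) * exp (t * (busemann0 o' \<psi> g \<xi> - ell)) \<partial>\<mu>)"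
      by (simp add: algebra_simps flip: exp_add ennreal_mult)
    also have "\<dots> = ennreal (exp (t * ell)) * (\<integral>\<^sup>+g. exp (t * (busemann0 o' \<psi> g \<xi> - ell)) \<partial>\<mu>)"
      by (rule nn_integral_cmult) simp
    also have "\<dots> \<le> ennreal (exp (t * ell)) * ennreal (exp s)"
      using mgf[OF that] by (rule mult_left_mono) simp
    finally show ?thesis
      by (simp add: exp_add ennreal_mult mult.commute)
  qed
qed (use x in auto)

lemma busemann_walk_mgf_le:
  fixes \<mu> :: "('a::metric_space \<Rightarrow> 'a) pmf" and t s :: real
  assumes isoms: "\<forall>g\<in>set_pmf \<mu>. isom g"
    and \<psi>: "\<And>h. h \<in> horo_compactification o' \<Longrightarrow> \<bar>\<psi> h\<bar> \<le> B"
    and mgf: "\<And>\<xi>. \<xi> \<in> horo_compactification o' \<Longrightarrow>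
               (\<integral>\<^sup>+g. exp (t * (busemann0 o' \<psi> g \<xi> - ell)) \<partial>\<mu>) \<le> ennreal (exp s)"
    and x: "x \<in> horo_compactification o'"
  shows "(\<integral>\<^sup>+\<omega>. exp (t * (busemann o' (walk n \<omega>) x - real n * ell)) \<partial>stream_space \<mu>)
           \<le> ennreal (exp (real n * s + 2 * B * \<bar>t\<bar>))"
proof -
  let ?S = "stream_space (measure_pmf \<mu>)" and ?c = "exp (2 * B * \<bar>t\<bar> - real n * t * ell)"
  have "(\<integral>\<^sup>+\<omega>. exp (t * (busemann o' (walk n \<omega>) x - real n * ell)) \<partial>?S)
      \<le> (\<integral>\<^sup>+\<omega>. ennreal ?c * exp (t * busemann0 o' \<psi> (walk n \<omega>) x) \<partial>?S)"
    using AE_isom_walk[OF isoms, of n]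
  proof (intro nn_integral_mono_AE, elim eventually_mono)
    fix \<omega> :: "('a \<Rightarrow> 'a) stream" assume "isom (walk n \<omega>)"
    from busemann_le_busemann0[where t=t, OF this x \<psi>]
    show "ennreal (exp (t * (busemann o' (walk n \<omega>) x - real n * ell)))
        \<le> ennreal ?c * exp (t * busemann0 o' \<psi> (walk n \<omega>) x)"
      by (simp add: algebra_simps flip: exp_add ennreal_mult)
  qed
  also have "\<dots> = ennreal ?c * (\<integral>\<^sup>+\<omega>. exp (t * busemann0 o' \<psi> (walk n \<omega>) x) \<partial>?S)"
    unfolding walk_eq_left_prod by (rule nn_integral_stake_cmult)
  also have "\<dots> \<le> ennreal ?c * ennreal (exp (real n * (s + t * ell)))"
    by (rule mult_left_mono[OF busemann0_walk_mgf_le[OF isoms mgf x] zero_le])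
  also have "\<dots> = ennreal (exp (real n * s + 2 * B * \<bar>t\<bar>))"
    by (simp add: algebra_simps flip: exp_add ennreal_mult)
  finally show ?thesis .
qed

lemma busemann0_increments_exp_dominated:
  fixes \<mu> :: "('a::metric_space \<Rightarrow> 'a) pmf"
  assumes isoms: "\<forall>g\<in>set_pmf \<mu>. isom g" and expm: "finite_exp_moment o' \<mu>"
    and \<psi>: "\<And>h. h \<in> horo_compactification o' \<Longrightarrow> \<bar>\<psi> h\<bar> \<le> B"
  obtains \<alpha> W where "0 < \<alpha>" and "integrable \<mu> (\<lambda>g. exp (\<alpha> * W g))"
    and "\<And>\<xi>. \<xi> \<in> horo_compactification o' \<Longrightarrow> AE g in \<mu>. \<bar>busemann0 o' \<psi> g \<xi> - ell\<bar> \<le> W g"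
proof -
  obtain \<alpha> where "0 < \<alpha>" and fin: "(\<integral>\<^sup>+g. exp (\<alpha> * kappa o' g) \<partial>\<mu>) < \<infinity>"
    using expm unfolding finite_exp_moment_def by blast
  have "integrable \<mu> (\<lambda>g. exp (\<alpha> * kappa o' g))"
    by (rule integrableI_bounded) (use fin in simp_all)
  from integrable_mult_left[OF this, of "exp (\<alpha> * (2 * B + \<bar>ell\<bar>))"]
  have "integrable \<mu> (\<lambda>g. exp (\<alpha> * (kappa o' g + 2 * B + \<bar>ell\<bar>)))"
    by (simp add: algebra_simps flip: exp_add)
  moreover have "AE g in \<mu>. \<bar>busemann0 o' \<psi> g \<xi> - ell\<bar> \<le> kappa o' g + 2 * B + \<bar>ell\<bar>"
    if "\<xi> \<in> horo_compactification o'" for \<xi>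
  proof (subst AE_measure_pmf_iff, intro ballI)
    fix g assume "g \<in> set_pmf \<mu>"
    then have "\<bar>busemann0 o' \<psi> g \<xi>\<bar> \<le> kappa o' g + 2 * B"
      using isoms abs_busemann0_le[where \<psi>=\<psi> and B=B, OF _ that \<psi>] by blast
    then show "\<bar>busemann0 o' \<psi> g \<xi> - ell\<bar> \<le> kappa o' g + 2 * B + \<bar>ell\<bar>"
      using abs_triangle_ineq4[of "busemann0 o' \<psi> g \<xi>" ell] by linarith
  qed
  ultimately show ?thesis
    using \<open>0 < \<alpha>\<close> by (intro that[of \<alpha> "\<lambda>g. kappa o' g + 2 * B + \<bar>ell\<bar>"])
qed

theorem proposition4p4:
  fixes o' :: "'a::metric_space" and \<mu> :: "('a \<Rightarrow> 'a) pmf"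
    and \<psi> :: "('a \<Rightarrow> real) \<Rightarrow> real" and ell :: real
  assumes sep: "separable_space TYPE('a)"
    and geod: "geodesic_space TYPE('a)"
    and hyp: "gromov_hyperbolic o'"
    and isoms: "\<forall>g\<in>set_pmf \<mu>. isom g"
    and nonel: "non_elementary o' \<mu>"
    and expm: "finite_exp_moment o' \<mu>"
    and drift: "AE \<omega> in stream_space (measure_pmf \<mu>).
                  (\<lambda>n. kappa o' (walk n \<omega>) / real n) \<longlonglongrightarrow> ell"
    and psi_bdd: "bounded (\<psi> ` horo_compactification o')"
    and psi_meas: "\<psi> \<in> borel_measurable (restrict_space borel (horo_compactification o'))"
    and psi_cent: "\<forall>x\<in>horo_compactification o'.
                    measure_pmf.expectation \<mu> (\<lambda>g. busemann0 o' \<psi> g x) = ell"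
  shows "let v = (SUP \<xi>\<in>horo_compactification o'.
                    measure_pmf.expectation \<mu> (\<lambda>g. (busemann0 o' \<psi> g \<xi> - ell)\<^sup>2))
         in \<exists>C>0. \<forall>\<epsilon>>0. \<exists>b>0. \<forall>t::real. \<bar>t\<bar> < v / b \<longrightarrow>
              (\<forall>n::nat. \<forall>x\<in>horo_compactification o'.
                 (\<integral>\<^sup>+ \<omega>. ennreal (exp (t * (busemann o' (walk n \<omega>) x - real n * ell)))
                    \<partial>stream_space (measure_pmf \<mu>))
                 \<le> ennreal (exp (t\<^sup>2 * (v + \<epsilon>) * real n / 2 + C * \<bar>t\<bar>)))"
proof -
  let ?K = "horo_compactification o'"
  define v where "v = (SUP \<xi>\<in>?K. measure_pmf.expectation \<mu> (\<lambda>g. (busemann0 o' \<psi> g \<xi> - ell)\<^sup>2))"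
  obtain B where "B > 0" and B: "\<And>h. h \<in> ?K \<Longrightarrow> \<bar>\<psi> h\<bar> \<le> B"
    using psi_bdd by (auto simp: bounded_pos)
  obtain \<alpha> W where \<alpha>: "0 < \<alpha>" and int_W: "integrable \<mu> (\<lambda>g. exp (\<alpha> * W g))"
    and dom: "\<And>\<xi>. \<xi> \<in> ?K \<Longrightarrow> AE g in \<mu>. \<bar>busemann0 o' \<psi> g \<xi> - ell\<bar> \<le> W g"
    using busemann0_increments_exp_dominated[where ell=ell and \<psi>=\<psi> and B=B, OF isoms expm B] by blast
  have "bdd_above ((\<lambda>\<xi>. measure_pmf.expectation \<mu> (\<lambda>g. (busemann0 o' \<psi> g \<xi> - ell)\<^sup>2)) ` ?K)"
    using exp_dominated_power_moment(2)[OF \<alpha> dom int_W, of _ 2] by (intro bdd_aboveI2) auto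
  then have var: "measure_pmf.expectation \<mu> (\<lambda>g. (busemann0 o' \<psi> g \<xi> - ell)\<^sup>2) \<le> v" if "\<xi> \<in> ?K" for \<xi>
    unfolding v_def using that by (rule cSUP_upper2) simp
  show ?thesis
    unfolding Let_def v_def[symmetric]
  proof (rule exI[of _ "2 * B"], intro conjI allI impI)
    fix \<epsilon> :: real assume "0 < \<epsilon>"
    obtain t\<^sub>0 where "0 < t\<^sub>0" and mgf: "\<And>\<xi> t. \<xi> \<in> ?K \<Longrightarrow> \<bar>t\<bar> < t\<^sub>0 \<Longrightarrow>
        (\<integral>\<^sup>+g. exp (t * (busemann0 o' \<psi> g \<xi> - ell)) \<partial>\<mu>) \<le> exp (t\<^sup>2 * (v + \<epsilon>) / 2)"
      using uniform_mgf_le_exp_variance[where X="\<lambda>\<xi> g. busemann0 o' \<psi> g \<xi>", OF \<alpha> int_W dom]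
        psi_cent var \<open>0 < \<epsilon>\<close> by blast
    have walk: "(\<integral>\<^sup>+\<omega>. exp (t * (busemann o' (walk n \<omega>) x - real n * ell)) \<partial>stream_space \<mu>)
        \<le> exp (t\<^sup>2 * (v + \<epsilon>) * real n / 2 + 2 * B * \<bar>t\<bar>)" if "\<bar>t\<bar> < t\<^sub>0" "x \<in> ?K" for t n x
      using busemann_walk_mgf_le[OF isoms B mgf[OF _ that(1)] that(2), of n] by (simp add: algebra_simps)
    \<comment> \<open>For \<open>v \<le> 0\<close> the range of admissible \<open>t\<close> is empty.\<close>
    with \<open>0 < t\<^sub>0\<close> show "\<exists>b>0. \<forall>t. \<bar>t\<bar> < v / b \<longrightarrow> (\<forall>n. \<forall>x\<in>?K.
        (\<integral>\<^sup>+\<omega>. exp (t * (busemann o' (walk n \<omega>) x - real n * ell)) \<partial>stream_space \<mu>)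
          \<le> exp (t\<^sup>2 * (v + \<epsilon>) * real n / 2 + 2 * B * \<bar>t\<bar>))"
      by (intro exI[of _ "if 0 < v then v / t\<^sub>0 else 1"]) (auto split: if_splits)
  qed (use \<open>0 < B\<close> in auto)
qed

end
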